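(* Let $k>0$, $d\ge 0$, $a>0$. Suppose that for some $\lambda>0$ $$\frac{a}{k}>\left[1+\frac{k}{\frac{k\lambda}{\arctan(k\lambda)}-1}\right](1+d\lambda^2).$$ Then there exists a real number $\mu>0$ satisfying the dispersion relation $$\frac12\int_{-1}^{1}\frac{1-k+\mathrm{i}\,\frac{a\lambda s}{1+d\lambda^2}}{1+k\mu+\mathrm{i}k\lambda s}\,ds=1 .$$ Equivalently, the linearized system (L) has a nonzero solution $g(x,\mathbf v)=\hat g(\mathbf v)e^{\mathrm{i}\lambda x}$, $S_g=\hat Se^{\mathrm{i}\lambda x}$ with a real growth rate $\mu>0$. Consequently, if $a/k$ exceeds the infimum over $\lambda>0$ of the right-hand side above, then the constant state $f\equiv S\equiv 1$ of the kinetic chemotaxis system is linearly unstable. Moreover, the displayed inequality forces $\beta:=\frac{a}{k(1+d\lambda^2)}>1$, that is, $0<\lambda<\sqrt{(a/k-1)/d}$ when $d>0$.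
   Context: Let $S^2\subset\mathbb{R}^3$ be the unit sphere, with surface measure $d\Omega$ (total mass $4\pi$). Write $\mathbf{v}=(v_1,v_2,v_3)\in S^2$ and $x\in\mathbb{R}$. Fix parameters $k>0$ (scaled mean run time), $d\ge0$ (diffusion coefficient), and $a=F'(0)>0$ (stiffness of the chemotactic response function $F$ at $0$). The linearized system (L), for the unknowns $g(x,\mathbf v)$ and $S_g(x)$ and a growth rate $\mu\in\mathbb{C}$, is $$k\big(\mu g+v_1\partial_x g\big)=\rho_g+a\,v_1\partial_x S_g-g-k\rho_g,\qquad -d\,\partial_{xx}S_g+S_g=\rho_g,\qquad \rho_g(x)=\frac1{4\pi}\int_{S^2}g(x,\mathbf v)\,d\Omega(\mathbf v).$$ This system is the linearization, around the constant state $f\equiv S\equiv\rho\equiv1$ with perturbations proportional to $e^{\mu t}$, of the kinetic chemotaxis system $$\partial_t f+v_1\partial_x f=\frac1k\Big\{\frac1{4\pi}\int_{S^2}K[D_t\log S|_{\mathbf v'}]f(\mathbf v')\,d\Omega(\mathbf v')-K[D_t\log S|_{\mathbf v}]f(\mathbf v)\Big\}+P[\rho]f ,$$ $$-d\,\partial_{xx}S+S=\rho,\qquad \rho=\frac1{4\pi}\int_{S^2} f\,d\Omega .$$ Here: - $K[X]=1-F[X]$, where $F$ is smooth and increasing with $F(0)=0$ and $F(X)\to\pm\chi$ as $X\to\pm\infty$, for some $0\le\chi<1$; - $D_t X|_{\mathbf v}=\partial_t X+v_1\partial_x X$; - $P$ satisfies $P(1)=0$ and $P'(1)=-1$. "Linearly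 unstable" means that (L) has a nonzero solution of the form $\hat g(\mathbf v)e^{\mathrm{i}\lambda x}$ with $\mathrm{Re}\,\mu>0$. *)

theory Defs
  imports "HOL-Analysis.Analysis"
begin

text \<open>Spherical-coordinate parametrisation of the unit sphere S^2 in R^3
  (polar angle th in [0,pi], azimuth ph in [0,2 pi]); the surface measure is
  sin th d th d ph.\<close>
definition sph :: "real \<Rightarrow> real \<Rightarrow> real^3" where
  "sph th ph = vector [sin th * cos ph, sin th * sin ph, cos th]"

definition sphere_integrable :: "(real^3 \<Rightarrow> complex) \<Rightarrow> bool" where
  "sphere_integrable f \<longleftrightarrow>
     (\<forall>th\<in>{0..pi}. (\<lambda>ph. f (sph th ph)) integrable_on {0..2*pi}) \<and>
     (\<lambda>th. complex_of_real (sin th) * integral {0..2*pi} (\<lambda>ph. f (sph th ph))) integrable_on {0..pi}"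

definition sphere_avg :: "(real^3 \<Rightarrow> complex) \<Rightarrow> complex" where
  "sphere_avg f = complex_of_real (1 / (4*pi)) *
     integral {0..pi} (\<lambda>th. complex_of_real (sin th) * integral {0..2*pi} (\<lambda>ph. f (sph th ph)))"

text \<open>The linearized system (L) with growth rate mu, for unknowns g(x,v) and S_g(x).
  Derivatives in x are classical derivatives of complex-valued functions of x.\<close>
definition L_solution ::
  "real \<Rightarrow> real \<Rightarrow> real \<Rightarrow> complex \<Rightarrow> (real \<Rightarrow> real^3 \<Rightarrow> complex) \<Rightarrow> (real \<Rightarrow> complex) \<Rightarrow> bool" where
  "L_solution k d a \<mu> g Sg \<longleftrightarrow>
     (\<forall>x. sphere_integrable (g x)) \<and>
     (\<forall>v\<in>sphere 0 1. \<forall>x. (\<lambda>y. g y v) differentiable (at x)) \<and>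
     (\<forall>x. Sg differentiable (at x)) \<and>
     (\<forall>x. (\<lambda>y. vector_derivative Sg (at y)) differentiable (at x)) \<and>
     (\<forall>x. \<forall>v\<in>sphere 0 1.
        complex_of_real k * (\<mu> * g x v + complex_of_real (v$1) * vector_derivative (\<lambda>y. g y v) (at x))
        = sphere_avg (g x) + complex_of_real a * complex_of_real (v$1) * vector_derivative Sg (at x)
          - g x v - complex_of_real k * sphere_avg (g x)) \<and>
     (\<forall>x. - complex_of_real d * vector_derivative (\<lambda>y. vector_derivative Sg (at y)) (at x) + Sg x
          = sphere_avg (g x))"

definition fourier_solution :: "real \<Rightarrow> real \<Rightarrow> real \<Rightarrow> real \<Rightarrow> complex \<Rightarrow> bool" where
  "fourier_solution k d a lam \<mu> \<longleftrightarrow>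
     (\<exists>gh Sh. (\<exists>v\<in>sphere 0 1. gh v \<noteq> 0) \<and>
        L_solution k d a \<mu> (\<lambda>x v. gh v * exp (\<i> * complex_of_real (lam * x)))
                            (\<lambda>x. Sh * exp (\<i> * complex_of_real (lam * x))))"

definition linearly_unstable :: "real \<Rightarrow> real \<Rightarrow> real \<Rightarrow> bool" where
  "linearly_unstable k d a \<longleftrightarrow> (\<exists>lam \<mu>. Re \<mu> > 0 \<and> fourier_solution k d a lam \<mu>)"

definition dispersion :: "real \<Rightarrow> real \<Rightarrow> real \<Rightarrow> real \<Rightarrow> real \<Rightarrow> bool" where
  "dispersion k d a lam \<mu> \<longleftrightarrow>
     complex_of_real (1/2) * integral {-1..1}
       (\<lambda>s. (complex_of_real (1 - k) + \<i> * complex_of_real (a * lam * s / (1 + d * lam^2)))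
            / (complex_of_real (1 + k * \<mu>) + \<i> * complex_of_real (k * lam * s))) = 1"

definition instab_rhs :: "real \<Rightarrow> real \<Rightarrow> real \<Rightarrow> real" where
  "instab_rhs k d lam = (1 + k / (k * lam / arctan (k * lam) - 1)) * (1 + d * lam^2)"

end

theory Submission
  imports Defs "HOL-Real_Asymp.Real_Asymp"
begin

text \<open>Inserting the plane wave \<open>g(x,v) = G(v) exp (i\<lambda>x)\<close>, \<open>S\<^sub>g(x) = S\<^sub>0 exp (i\<lambda>x)\<close>
  into (L) leaves the algebraic system \<open>G(v) = \<rho> I(v\<^sub>1)\<close>, \<open>S\<^sub>0 = \<rho> / (1 + d\<lambda>\<^sup>2)\<close>, where
  \<open>\<rho>\<close> is the sphere average of \<open>G\<close> and \<open>I\<close> the integrand of the dispersion relation.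
  The sphere average of a function of \<open>v\<^sub>1\<close> alone is half its integral over \<open>[-1,1]\<close>
  (Archimedes); both are evaluated here by explicit antiderivatives, giving the common value
  \<open>J(\<mu>) = \<beta> + (1 - k - \<beta>(1 + k\<mu>)) arctan (k\<lambda>/(1 + k\<mu>)) / (k\<lambda>)\<close> with
  \<open>\<beta> = a / (k(1 + d\<lambda>\<^sup>2))\<close>. Averaging the system gives \<open>\<rho> = \<rho> J(\<mu>)\<close>, so nonzero
  plane waves with real growth rate \<open>\<mu>\<close> exist exactly when \<open>J(\<mu>) = 1\<close>. The hypothesis
  says precisely that \<open>J(0) > 1\<close>, and \<open>J(\<mu>) \<rightarrow> 0\<close> as \<open>\<mu> \<rightarrow> \<infinity>\<close>, so the intermediate
  value theorem yields a root \<open>\<mu> > 0\<close>.\<close>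

lemma arctan_less_self:
  fixes x :: real
  assumes "0 < x"
  shows "arctan x < x"
proof -
  have "(\<lambda>t. t - arctan t) 0 < (\<lambda>t. t - arctan t) x"
  proof (rule DERIV_pos_imp_increasing_open[OF assms])
    fix t :: real assume "0 < t"
    then have "inverse (1 + t^2) < 1"
      by (intro inverse_less_1_iff[THEN iffD2]) auto
    moreover have "((\<lambda>t. t - arctan t) has_real_derivative 1 - inverse (1 + t^2)) (at t)"
      by (auto intro!: derivative_eq_intros)
    ultimately show "\<exists>y. ((\<lambda>t. t - arctan t) has_real_derivative y) (at t) \<and> 0 < y"
      by force
  qed (intro continuous_intros)
  then show ?thesis by simp
qed

lemma has_integral_complex_of_derivatives:
  fixes \<phi> \<psi> :: "real \<Rightarrow> real"
  assumes "a \<le> b"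
    and \<phi>: "\<And>x. x \<in> {a..b} \<Longrightarrow> (\<phi> has_real_derivative \<phi>' x) (at x)"
    and \<psi>: "\<And>x. x \<in> {a..b} \<Longrightarrow> (\<psi> has_real_derivative \<psi>' x) (at x)"
    and f: "\<And>x. x \<in> {a..b} \<Longrightarrow> f x = complex_of_real (\<phi>' x) + \<i> * complex_of_real (\<psi>' x)"
  shows "(f has_integral (complex_of_real (\<phi> b - \<phi> a) + \<i> * complex_of_real (\<psi> b - \<psi> a))) {a..b}"
proof -
  have "((\<lambda>x. complex_of_real (\<phi>' x) + \<i> * complex_of_real (\<psi>' x)) has_integral
      (complex_of_real (\<phi> b) + \<i> * complex_of_real (\<psi> b)) - (complex_of_real (\<phi> a) + \<i> * complex_of_real (\<psi> a))) {a..b}"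
  proof (rule fundamental_theorem_of_calculus[OF assms(1)])
    fix x assume x: "x \<in> {a..b}"
    show "((\<lambda>x. complex_of_real (\<phi> x) + \<i> * complex_of_real (\<psi> x)) has_vector_derivative
        complex_of_real (\<phi>' x) + \<i> * complex_of_real (\<psi>' x)) (at x within {a..b})"
      by (intro has_vector_derivative_add has_vector_derivative_mult_right has_vector_derivative_of_real
          has_field_derivative_at_within[OF \<phi>[OF x]] has_field_derivative_at_within[OF \<psi>[OF x]])
  qed
  also have "(complex_of_real (\<phi> b) + \<i> * complex_of_real (\<psi> b)) - (complex_of_real (\<phi> a) + \<i> * complex_of_real (\<psi> a))
      = complex_of_real (\<phi> b - \<phi> a) + \<i> * complex_of_real (\<psi> b - \<psi> a)"
    by (simp add: algebra_simps)
  finally show ?thesis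
    by (subst has_integral_cong[where g = "\<lambda>x. complex_of_real (\<phi>' x) + \<i> * complex_of_real (\<psi>' x)"]) (use f in auto)
qed

lemma of_real_add_divide_split:
  fixes C x P E :: real
  assumes "C > 0"
  shows "complex_of_real P + complex_of_real E / (complex_of_real C + \<i> * complex_of_real x) =
      complex_of_real (P + E * C / (C^2 + x^2)) + \<i> * complex_of_real (- E * x / (C^2 + x^2))"
proof -
  have "complex_of_real C + \<i> * complex_of_real x \<noteq> 0" using assms by (simp add: complex_eq_iff)
  moreover have "C * C + x * x \<noteq> 0" using assms by (simp add: add_pos_nonneg)
  ultimately show ?thesis
    by (simp add: complex_eq_iff Re_divide Im_divide power2_eq_square mult_ac)
qed

lemma has_integral_reciprocal_imaginary_segment:
  fixes C D P E :: real
  assumes C: "C > 0" and D: "D > 0"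
  shows "((\<lambda>s. complex_of_real P + complex_of_real E / (complex_of_real C + \<i> * complex_of_real (D * s)))
     has_integral 2 * complex_of_real (P + E * (arctan (D / C) / D))) {-1..1}"
proof -
  define \<phi> where "\<phi> s = P * s + E / D * arctan (D * s / C)" for s
  define \<psi> where "\<psi> s = - E / (2 * D) * ln (C^2 + D^2 * s^2)" for s
  have pos: "C^2 + D^2 * s^2 > 0" for s using C by (simp add: add_pos_nonneg)
  then have pos': "C * C + D * (D * (s * s)) > 0" for s by (simp add: power2_eq_square mult.assoc)
  have "C \<noteq> 0" "D \<noteq> 0" using C D by auto
  have d\<phi>: "(\<phi> has_real_derivative P + E * C / (C^2 + (D * s)^2)) (at s)" for s
    unfolding \<phi>_def
    apply (rule DERIV_cong)
     apply (rule derivative_eq_intros refl | simp add: \<open>C \<noteq> 0\<close> \<open>D \<noteq> 0\<close>)+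
    using C D pos'[of s] mult_pos_pos[OF C pos'[of s]] by (simp add: field_simps power2_eq_square)
  have d\<psi>: "(\<psi> has_real_derivative - E * (D * s) / (C^2 + (D * s)^2)) (at s)" for s
    unfolding \<psi>_def
    apply (rule DERIV_cong)
     apply (rule derivative_eq_intros refl | simp add: pos \<open>C \<noteq> 0\<close> \<open>D \<noteq> 0\<close>)+
    using C D pos'[of s] mult_pos_pos[OF D pos'[of s]] by (simp add: field_simps power2_eq_square)
  have "((\<lambda>s. complex_of_real P + complex_of_real E / (complex_of_real C + \<i> * complex_of_real (D * s)))
     has_integral complex_of_real (\<phi> 1 - \<phi> (-1)) + \<i> * complex_of_real (\<psi> 1 - \<psi> (-1))) {-1..1}"
    by (rule has_integral_complex_of_derivatives[OF _ d\<phi> d\<psi> of_real_add_divide_split[OF C]]) simp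
  moreover have "\<phi> 1 - \<phi> (-1) = 2 * (P + E * (arctan (D / C) / D))" "\<psi> 1 - \<psi> (-1) = 0"
    unfolding \<phi>_def \<psi>_def by (simp_all add: arctan_minus field_simps)
  ultimately show ?thesis by simp
qed

text \<open>The naive antiderivative \<open>arctan (C tan t / R) / R\<close> of \<open>C / (C\<^sup>2 + (r cos t)\<^sup>2)\<close>
  jumps at the zeros of \<open>cos t\<close>; subtracting \<open>arctan (tan t) - t\<close> and applying the
  subtraction formula for \<open>arctan\<close> gives the continuous antiderivative used here.\<close>

lemma has_real_derivative_arctan_tan_difference:
  fixes C r t :: real
  assumes C: "C > 0"
  defines "R \<equiv> sqrt (C^2 + r^2)"
  shows "((\<lambda>t. arctan ((C - R) * (sin t * cos t) / (R * (cos t)^2 + C * (sin t)^2)))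
      has_real_derivative (C - R) * (R * (cos t)^2 - C * (sin t)^2) / (C^2 + (r * cos t)^2)) (at t)"
proof -
  define s where "s = sin t"
  define c where "c = cos t"
  define M where "M = R * c^2 + C * s^2"
  define N where "N = (C - R) * (s * c)"
  have sc: "s^2 + c^2 = 1" unfolding s_def c_def by simp
  have R2: "R^2 = C^2 + r^2" unfolding R_def by (simp add: add_pos_nonneg)
  have "R \<ge> C" unfolding R_def using C
    by (metis abs_of_pos le_add_same_cancel1 real_sqrt_abs real_sqrt_le_mono zero_le_power2)
  then have "M \<ge> C * (c^2 + s^2)" unfolding M_def by (simp add: algebra_simps mult_right_mono)
  then have M: "M > 0" using sc C by (simp add: add.commute)
  have MN: "M^2 + N^2 = C^2 + (r * c)^2"
  proof -
    have "M^2 + N^2 = (R^2 * c^2 + C^2 * s^2) * (c^2 + s^2)"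
      unfolding M_def N_def by (simp add: power2_eq_square algebra_simps)
    also have "\<dots> = R^2 * c^2 + C^2 * s^2" using sc by (simp add: add.commute)
    also have "\<dots> = C^2 * (s^2 + c^2) + (r * c)^2" using R2 by (simp add: power2_eq_square algebra_simps)
    finally show ?thesis using sc by simp
  qed
  have dN: "((\<lambda>t. (C - R) * (sin t * cos t)) has_real_derivative (C - R) * (c^2 - s^2)) (at t)"
    apply (rule DERIV_cong)
     apply (rule derivative_eq_intros refl | simp)+
    by (simp add: s_def c_def power2_eq_square algebra_simps)
  have dM: "((\<lambda>t. R * (cos t)^2 + C * (sin t)^2) has_real_derivative 2 * (C - R) * s * c) (at t)"
    apply (rule DERIV_cong)
     apply (rule derivative_eq_intros refl | simp)+
    by (simp add: s_def c_def power2_eq_square algebra_simps)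
  have "((\<lambda>t. arctan ((C - R) * (sin t * cos t) / (R * (cos t)^2 + C * (sin t)^2))) has_real_derivative
      inverse (1 + (N / M)^2) * (((C - R) * (c^2 - s^2) * M - N * (2 * (C - R) * s * c)) / (M * M))) (at t)"
    using DERIV_chain'[OF DERIV_divide[OF dN dM] DERIV_arctan] M unfolding M_def N_def s_def c_def by simp
  moreover have "(C - R) * (c^2 - s^2) * M - N * (2 * (C - R) * s * c) = (C - R) * (R * c^2 - C * s^2) * (c^2 + s^2)"
    unfolding M_def N_def by (simp add: power2_eq_square algebra_simps)
  moreover have "inverse (1 + (N / M)^2) = M^2 / (M^2 + N^2)"
    using M by (simp add: field_simps power2_eq_square)
  ultimately show ?thesis using M MN sc unfolding s_def c_def by (simp add: power2_eq_square add.commute)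
qed

lemma has_real_derivative_azimuthal_angle:
  fixes C r t :: real
  assumes C: "C > 0"
  defines "R \<equiv> sqrt (C^2 + r^2)"
  shows "((\<lambda>t. t + arctan ((C - R) * (sin t * cos t) / (R * (cos t)^2 + C * (sin t)^2)))
      has_real_derivative R * C / (C^2 + (r * cos t)^2)) (at t)"
proof -
  define s where "s = sin t"
  define c where "c = cos t"
  have "r^2 = R^2 - C^2" unfolding R_def by (simp add: add_pos_nonneg)
  have "C^2 + (r * c)^2 > 0" using C by (simp add: add_pos_nonneg)
  then have "1 + (C - R) * (R * c^2 - C * s^2) / (C^2 + (r * c)^2)
      = (C^2 + (r * c)^2 + (C - R) * (R * c^2 - C * s^2)) / (C^2 + (r * c)^2)"
    using C by (simp add: add_divide_distrib)
  also have "C^2 + (r * c)^2 + (C - R) * (R * c^2 - C * s^2) = C^2 * (1 - (s^2 + c^2)) + R * C * (c^2 + s^2)"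
    unfolding power_mult_distrib \<open>r^2 = R^2 - C^2\<close> by (simp add: power2_eq_square algebra_simps)
  finally have "1 + (C - R) * (R * c^2 - C * s^2) / (C^2 + (r * c)^2) = R * C / (C^2 + (r * c)^2)"
    unfolding s_def c_def by (simp add: add.commute)
  with DERIV_add[OF DERIV_ident has_real_derivative_arctan_tan_difference[OF C, of r t]]
  show ?thesis unfolding R_def s_def c_def by simp
qed

lemma has_real_derivative_azimuthal_log:
  fixes C r t :: real
  assumes C: "C > 0"
  defines "R \<equiv> sqrt (C^2 + r^2)"
  shows "((\<lambda>t. ln (R + r * sin t) - ln (R - r * sin t))
      has_real_derivative 2 * R * (r * cos t) / (C^2 + (r * cos t)^2)) (at t)"
proof -
  have R2: "R^2 = C^2 + r^2" unfolding R_def by (simp add: add_pos_nonneg)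
  have "\<bar>r\<bar> < R" unfolding R_def using C
    by (metis add_pos_nonneg le_add_same_cancel2 less_add_same_cancel2 not_le real_sqrt_abs
        real_sqrt_less_mono zero_le_power2 zero_less_power2 less_imp_neq)
  moreover have "\<bar>r * sin t\<bar> \<le> \<bar>r\<bar>" by (simp add: abs_mult mult_left_le)
  ultimately have pos: "R + r * sin t > 0" "R - r * sin t > 0" by linarith+
  have "((\<lambda>t. R + r * sin t) has_real_derivative r * cos t) (at t)"
    and "((\<lambda>t. R - r * sin t) has_real_derivative - (r * cos t)) (at t)"
    by (auto intro!: derivative_eq_intros)
  from DERIV_diff[OF DERIV_chain'[OF this(1) DERIV_ln_divide[OF pos(1)]] DERIV_chain'[OF this(2) DERIV_ln_divide[OF pos(2)]]]
  have "((\<lambda>t. ln (R + r * sin t) - ln (R - r * sin t))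
      has_real_derivative r * cos t / (R + r * sin t) + r * cos t / (R - r * sin t)) (at t)"
    by simp
  moreover have "(R + r * sin t) * (R - r * sin t) = C^2 + (r * cos t)^2"
  proof -
    have "(R + r * sin t) * (R - r * sin t) = C^2 + r^2 * (1 - (sin t)^2)"
      using R2 by (simp add: power2_eq_square algebra_simps)
    then show ?thesis by (simp add: cos_squared_eq power_mult_distrib)
  qed
  ultimately show ?thesis
    using pos by (simp add: field_simps)
qed

lemma has_integral_reciprocal_cosine:
  fixes C r P E :: real
  assumes C: "C > 0"
  shows "((\<lambda>ph. complex_of_real P + complex_of_real E / (complex_of_real C + \<i> * complex_of_real (r * cos ph)))
     has_integral complex_of_real (2 * pi * (P + E / sqrt (C^2 + r^2)))) {0..2*pi}"
proof -
  define R where "R = sqrt (C^2 + r^2)"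
  have R: "R > 0" unfolding R_def using C by (simp add: add_pos_nonneg)
  define \<phi> where "\<phi> t = P * t + E / R * (t + arctan ((C - R) * (sin t * cos t) / (R * (cos t)^2 + C * (sin t)^2)))" for t
  define \<psi> where "\<psi> t = - E / (2 * R) * (ln (R + r * sin t) - ln (R - r * sin t))" for t
  have d\<phi>: "(\<phi> has_real_derivative P + E * C / (C^2 + (r * cos t)^2)) (at t)" for t
    using DERIV_add[OF DERIV_cmult[OF DERIV_ident, of P]
        DERIV_cmult[OF has_real_derivative_azimuthal_angle[OF C, of r t], of "E / R"]] R
    unfolding \<phi>_def R_def[symmetric] by simp
  have d\<psi>: "(\<psi> has_real_derivative - E * (r * cos t) / (C^2 + (r * cos t)^2)) (at t)" for t
    using DERIV_cmult[OF has_real_derivative_azimuthal_log[OF C, of r t], of "- E / (2 * R)"] R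
    unfolding \<psi>_def R_def[symmetric] by simp
  have "((\<lambda>ph. complex_of_real P + complex_of_real E / (complex_of_real C + \<i> * complex_of_real (r * cos ph)))
     has_integral complex_of_real (\<phi> (2 * pi) - \<phi> 0) + \<i> * complex_of_real (\<psi> (2 * pi) - \<psi> 0)) {0..2*pi}"
    by (rule has_integral_complex_of_derivatives[OF _ d\<phi> d\<psi> of_real_add_divide_split[OF C]]) simp
  moreover have "\<phi> (2 * pi) - \<phi> 0 = 2 * pi * (P + E / R)" "\<psi> (2 * pi) - \<psi> 0 = 0"
    unfolding \<phi>_def \<psi>_def by (simp_all add: algebra_simps)
  ultimately show ?thesis unfolding R_def by simp
qed

lemma has_real_derivative_polar_arctan:
  fixes C D t :: real
  assumes C: "C > 0"
  shows "((\<lambda>t. arctan (D * cos t / sqrt (C^2 + (D * sin t)^2)))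
      has_real_derivative - D * sin t / sqrt (C^2 + (D * sin t)^2)) (at t)"
proof -
  define s where "s = sin t"
  define c where "c = cos t"
  define Q where "Q = sqrt (C^2 + (D * s)^2)"
  have sc: "s^2 + c^2 = 1" unfolding s_def c_def by simp
  have Q2pos: "C^2 + (D * s)^2 > 0" using C by (simp add: add_pos_nonneg)
  then have Q: "Q > 0" and Q2: "Q^2 = C^2 + (D * s)^2" unfolding Q_def by simp_all
  have "((\<lambda>t. C^2 + (D * sin t)^2) has_real_derivative 2 * D^2 * s * c) (at t)"
    apply (rule DERIV_cong)
     apply (rule derivative_eq_intros refl | simp)+
    unfolding s_def c_def by (simp add: power2_eq_square)
  from DERIV_chain'[OF this DERIV_real_sqrt[OF Q2pos[unfolded s_def]]]
  have dQ: "((\<lambda>t. sqrt (C^2 + (D * sin t)^2)) has_real_derivative D^2 * s * c / Q) (at t)"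
    unfolding Q_def s_def by (simp add: field_simps)
  have "((\<lambda>t. D * cos t / sqrt (C^2 + (D * sin t)^2)) has_real_derivative
       (D * (- s) * Q - D * c * (D^2 * s * c / Q)) / (Q * Q)) (at t)"
    using DERIV_divide[OF DERIV_cmult[where c=D, OF DERIV_cos] dQ] Q C unfolding Q_def s_def c_def by simp
  from DERIV_chain'[OF this DERIV_arctan]
  have "((\<lambda>t. arctan (D * cos t / sqrt (C^2 + (D * sin t)^2))) has_real_derivative
       inverse (1 + (D * c / Q)^2) * ((D * (- s) * Q - D * c * (D^2 * s * c / Q)) / (Q * Q))) (at t)"
    unfolding Q_def s_def c_def by simp
  moreover have "inverse (1 + (D * c / Q)^2) * ((D * (- s) * Q - D * c * (D^2 * s * c / Q)) / (Q * Q)) = - D * s / Q"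
  proof -
    have CD: "Q^2 + D^2 * c^2 = C^2 + D^2"
      unfolding Q2 using sc by (simp add: power2_eq_square algebra_simps) (metis distrib_left mult.right_neutral)
    have e1: "1 + (D * c / Q)^2 = (C^2 + D^2) / Q^2"
      using Q CD by (simp add: field_simps power2_eq_square)
    have "D * (- s) * Q - D * c * (D^2 * s * c / Q) = - D * s * (Q^2 + D^2 * c^2) / Q"
      using Q by (simp add: field_simps power2_eq_square)
    also have "\<dots> = - D * s * (C^2 + D^2) / Q" unfolding CD ..
    finally have e2: "D * (- s) * Q - D * c * (D^2 * s * c / Q) = - D * s * (C^2 + D^2) / Q" .
    have "inverse (X / Q^2) * (- D * s * X / Q / (Q * Q)) = - D * s / Q" if "X > 0" for X
      using Q that by (simp add: field_simps power2_eq_square)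
    then show ?thesis unfolding e1 e2 using C by (simp add: add_pos_nonneg)
  qed
  ultimately show ?thesis unfolding Q_def s_def by simp
qed

lemma sph_nth_1 [simp]: "sph th ph $ 1 = sin th * cos ph"
  unfolding sph_def by simp

lemma sph_in_sphere: "sph th ph \<in> sphere 0 1"
proof -
  have "norm (sph th ph) = sqrt ((sin th * cos ph)^2 + (sin th * sin ph)^2 + (cos th)^2)"
    unfolding sph_def norm_vec_def L2_set_def sum_3 by (simp add: power2_eq_square)
  also have "(sin th * cos ph)^2 + (sin th * sin ph)^2 = (sin th)^2"
    by (metis mult.right_neutral power_mult_distrib sin_cos_squared_add2 distrib_left)
  finally show ?thesis by simp
qed

lemma sphere_avg_cong:
  assumes "\<And>v. v \<in> sphere 0 1 \<Longrightarrow> f v = g v"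
  shows "sphere_avg f = sphere_avg g"
  unfolding sphere_avg_def using assms[OF sph_in_sphere] by simp

lemma sphere_avg_mult_right: "sphere_avg (\<lambda>v. f v * c) = sphere_avg f * c"
  unfolding sphere_avg_def by (simp add: mult_ac)

lemma sphere_integrable_mult_right:
  assumes "sphere_integrable f"
  shows "sphere_integrable (\<lambda>v. f v * c)"
proof -
  have "(\<lambda>th. complex_of_real (sin th) * integral {0..2*pi} (\<lambda>ph. f (sph th ph)) * c) integrable_on {0..pi}"
    using assms unfolding sphere_integrable_def by (intro integrable_on_mult_left) blast
  moreover have "\<forall>th\<in>{0..pi}. (\<lambda>ph. f (sph th ph) * c) integrable_on {0..2*pi}"
    using assms unfolding sphere_integrable_def by (auto intro!: integrable_on_mult_left)
  ultimately show ?thesis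
    unfolding sphere_integrable_def by (simp add: mult.assoc)
qed

lemma sphere_avg_reciprocal_first_coordinate:
  fixes C D P E :: real
  assumes C: "C > 0" and D: "D > 0"
  defines "h \<equiv> \<lambda>v::real^3. complex_of_real P + complex_of_real E / (complex_of_real C + \<i> * complex_of_real (D * v$1))"
  shows "sphere_integrable h"
    and "sphere_avg h = complex_of_real (P + E * (arctan (D / C) / D))"
proof -
  define Q where "Q th = 2 * pi * (P + E / sqrt (C^2 + (D * sin th)^2))" for th
  have inner: "((\<lambda>ph. h (sph th ph)) has_integral complex_of_real (Q th)) {0..2*pi}" for th
    using has_integral_reciprocal_cosine[OF C, of P E "D * sin th"]
    unfolding h_def Q_def by (simp add: mult.assoc)
  define \<Phi> where "\<Phi> t = 2 * pi * (- P * cos t - E / D * arctan (D * cos t / sqrt (C^2 + (D * sin t)^2)))" for t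
  have "(\<Phi> has_real_derivative sin t * Q t) (at t)" for t
    using DERIV_cmult[OF DERIV_diff[OF DERIV_cmult[OF DERIV_cos, of "- P"]
        DERIV_cmult[OF has_real_derivative_polar_arctan[OF C, of D t], of "E / D"]], of "2 * pi"] D
    unfolding \<Phi>_def Q_def by (simp add: field_simps)
  then have "((\<lambda>th. complex_of_real (sin th * Q th)) has_integral
      complex_of_real (\<Phi> pi - \<Phi> 0) + \<i> * complex_of_real (0 - 0)) {0..pi}"
    by (intro has_integral_complex_of_derivatives[where \<psi>="\<lambda>_. 0" and \<psi>'="\<lambda>_. 0"]) auto
  moreover have "\<Phi> pi - \<Phi> 0 = 4 * pi * (P + E * (arctan (D / C) / D))"
    unfolding \<Phi>_def using C by (simp add: arctan_minus field_simps)
  ultimately have outer: "((\<lambda>th. complex_of_real (sin th) * integral {0..2*pi} (\<lambda>ph. h (sph th ph))) has_integral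
      complex_of_real (4 * pi * (P + E * (arctan (D / C) / D)))) {0..pi}"
    unfolding integral_unique[OF inner] by simp
  show "sphere_integrable h"
    unfolding sphere_integrable_def using inner outer by blast
  show "sphere_avg h = complex_of_real (P + E * (arctan (D / C) / D))"
    unfolding sphere_avg_def integral_unique[OF outer] by simp
qed

definition dispersion_integrand :: "real \<Rightarrow> real \<Rightarrow> real \<Rightarrow> real \<Rightarrow> real \<Rightarrow> real \<Rightarrow> complex" where
  "dispersion_integrand k d a lam \<mu> s =
     (complex_of_real (1 - k) + \<i> * complex_of_real (a * lam * s / (1 + d * lam^2)))
       / (complex_of_real (1 + k * \<mu>) + \<i> * complex_of_real (k * lam * s))"

definition dispersion_mean :: "real \<Rightarrow> real \<Rightarrow> real \<Rightarrow> real \<Rightarrow> real \<Rightarrow> real" where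
  "dispersion_mean k d a lam \<mu> =
     (let \<beta> = a / (k * (1 + d * lam^2))
      in \<beta> + (1 - k - \<beta> * (1 + k * \<mu>)) * (arctan (k * lam / (1 + k * \<mu>)) / (k * lam)))"

lemma dispersion_integrand_eq:
  fixes k d a lam \<mu> s :: real
  assumes "k > 0" "lam > 0" "1 + k * \<mu> > 0"
  defines "\<beta> \<equiv> a / (k * (1 + d * lam^2))"
  shows "dispersion_integrand k d a lam \<mu> s = complex_of_real \<beta>
     + complex_of_real (1 - k - \<beta> * (1 + k * \<mu>)) / (complex_of_real (1 + k * \<mu>) + \<i> * complex_of_real (k * lam * s))"
proof -
  have den: "complex_of_real (1 + k * \<mu>) + \<i> * complex_of_real (k * lam * s) \<noteq> 0"
    using assms by (simp add: complex_eq_iff)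
  have "\<beta> * (k * lam * s) = a * lam * s / (1 + d * lam^2)"
    using assms unfolding \<beta>_def by simp
  then have "complex_of_real \<beta> * (complex_of_real (1 + k * \<mu>) + \<i> * complex_of_real (k * lam * s))
      + complex_of_real (1 - k - \<beta> * (1 + k * \<mu>))
      = complex_of_real (1 - k) + \<i> * complex_of_real (a * lam * s / (1 + d * lam^2))"
    by (simp add: complex_eq_iff algebra_simps)
  then show ?thesis
    unfolding dispersion_integrand_def using den by (simp add: field_simps)
qed

lemma has_integral_dispersion_integrand:
  fixes k d a lam \<mu> :: real
  assumes "k > 0" "lam > 0" "1 + k * \<mu> > 0"
  shows "(dispersion_integrand k d a lam \<mu> has_integral 2 * complex_of_real (dispersion_mean k d a lam \<mu>)) {-1..1}"
proof -
  define \<beta> where "\<beta> = a / (k * (1 + d * lam^2))"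
  have "k * lam > 0" using assms by simp
  from has_integral_reciprocal_imaginary_segment[OF assms(3) this, of \<beta> "1 - k - \<beta> * (1 + k * \<mu>)"]
  show ?thesis
    unfolding dispersion_integrand_eq[OF assms, abs_def] dispersion_mean_def Let_def \<beta>_def .
qed

lemma dispersion_iff_dispersion_mean:
  fixes k d a lam \<mu> :: real
  assumes "k > 0" "lam > 0" "1 + k * \<mu> > 0"
  shows "dispersion k d a lam \<mu> \<longleftrightarrow> dispersion_mean k d a lam \<mu> = 1"
proof -
  have "dispersion k d a lam \<mu> \<longleftrightarrow> complex_of_real (1 / 2) * integral {-1..1} (dispersion_integrand k d a lam \<mu>) = 1"
    unfolding dispersion_def dispersion_integrand_def ..
  then show ?thesis
    using integral_unique[OF has_integral_dispersion_integrand[OF assms]] by simp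
qed

lemma
  fixes k d a lam \<mu> :: real
  assumes "k > 0" "lam > 0" "1 + k * \<mu> > 0"
  shows sphere_integrable_dispersion_integrand: "sphere_integrable (\<lambda>v. dispersion_integrand k d a lam \<mu> (v$1))"
    and sphere_avg_dispersion_integrand:
      "sphere_avg (\<lambda>v. dispersion_integrand k d a lam \<mu> (v$1)) = complex_of_real (dispersion_mean k d a lam \<mu>)"
proof -
  define \<beta> where "\<beta> = a / (k * (1 + d * lam^2))"
  have "k * lam > 0" using assms by simp
  note sphere = sphere_avg_reciprocal_first_coordinate[OF assms(3) this, of \<beta> "1 - k - \<beta> * (1 + k * \<mu>)"]
  show "sphere_integrable (\<lambda>v. dispersion_integrand k d a lam \<mu> (v$1))"
    using sphere(1) unfolding dispersion_integrand_eq[OF assms] \<beta>_def .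
  show "sphere_avg (\<lambda>v. dispersion_integrand k d a lam \<mu> (v$1)) = complex_of_real (dispersion_mean k d a lam \<mu>)"
    using sphere(2) unfolding dispersion_integrand_eq[OF assms] dispersion_mean_def Let_def \<beta>_def .
qed

lemma instab_rhs_gt:
  fixes k d l :: real
  assumes "k > 0" "d \<ge> 0" "l > 0"
  shows "instab_rhs k d l > 1 + d * l^2"
proof -
  have "k * l > 0" using assms by simp
  then have "0 < arctan (k * l)" "arctan (k * l) < k * l"
    using arctan_less_self by auto
  then have "k / (k * l / arctan (k * l) - 1) > 0"
    using assms by (simp add: field_simps)
  moreover have "1 + d * l^2 > 0" using assms by (simp add: add_pos_nonneg)
  ultimately show ?thesis unfolding instab_rhs_def by simp
qed

lemma dispersion_mean_zero_gt_one:
  fixes k d a lam :: real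
  assumes k: "k > 0" and d: "d \<ge> 0" and lam: "lam > 0"
    and threshold: "a / k > instab_rhs k d lam"
  shows "dispersion_mean k d a lam 0 > 1"
proof -
  define \<beta> where "\<beta> = a / (k * (1 + d * lam^2))"
  define y where "y = k * lam"
  define u where "u = y / arctan y - 1"
  have y: "y > 0" unfolding y_def using k lam by simp
  have t: "0 < arctan y" "arctan y < y" using y arctan_less_self by auto
  then have u: "u > 0" unfolding u_def by (simp add: field_simps)
  have "1 + d * lam^2 > 0" using d by (simp add: add_pos_nonneg)
  moreover have "(1 + k / u) * (1 + d * lam^2) < a / k"
    using threshold unfolding instab_rhs_def u_def y_def .
  ultimately have "1 + k / u < a / k / (1 + d * lam^2)"
    by (simp only: pos_less_divide_eq)
  then have "\<beta> > 1 + k / u" unfolding \<beta>_def by (simp add: field_simps)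
  then have "(\<beta> - 1) * u > k" using u by (simp add: field_simps)
  have "arctan y / y = 1 / (1 + u)"
    unfolding u_def using t by (simp add: field_simps)
  then have "dispersion_mean k d a lam 0 = \<beta> + (1 - k - \<beta>) / (1 + u)"
    unfolding dispersion_mean_def Let_def \<beta>_def[symmetric] y_def[symmetric] by simp
  moreover have "\<beta> + (1 - k - \<beta>) / (1 + u) - 1 = ((\<beta> - 1) * u - k) / (1 + u)"
    using u by (simp add: field_simps)
  moreover have "((\<beta> - 1) * u - k) / (1 + u) > 0"
    using \<open>(\<beta> - 1) * u > k\<close> u by simp
  ultimately show ?thesis by linarith
qed

lemma tendsto_dispersion_mean_at_top:
  fixes k d a lam :: real
  assumes "k > 0" "lam > 0"
  shows "(dispersion_mean k d a lam \<longlongrightarrow> 0) at_top"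
proof -
  have "((\<lambda>\<mu>. b + (c - b * (1 + k * \<mu>)) * (arctan (D / (1 + k * \<mu>)) / D)) \<longlongrightarrow> 0) at_top"
    if "D > 0" for b c D :: real
    using assms(1) that by (real_asymp simp: field_simps)
  from this[of "k * lam" "a / (k * (1 + d * lam^2))" "1 - k"] show ?thesis
    using assms unfolding dispersion_mean_def[abs_def] Let_def by simp
qed

lemma continuous_on_dispersion_mean:
  fixes k d a lam :: real
  assumes "k > 0" "lam > 0"
  shows "continuous_on {0..} (dispersion_mean k d a lam)"
proof -
  have "continuous_on {0..} (\<lambda>\<mu>. b + (c - b * (1 + k * \<mu>)) * (arctan (D / (1 + k * \<mu>)) / D))"
    if "D \<noteq> 0" for b c D :: real
  proof (intro continuous_intros ballI)
    fix \<mu> :: real assume "\<mu> \<in> {0..}"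
    then have "k * \<mu> \<ge> 0" using assms by simp
    then show "1 + k * \<mu> \<noteq> 0" by linarith
  qed (use that in auto)
  from this[of "k * lam" "a / (k * (1 + d * lam^2))" "1 - k"] show ?thesis
    using assms unfolding dispersion_mean_def[abs_def] Let_def by simp
qed

lemma exists_dispersion_mean_eq_one:
  fixes k d a lam :: real
  assumes k: "k > 0" and d: "d \<ge> 0" and lam: "lam > 0"
    and threshold: "a / k > instab_rhs k d lam"
  shows "\<exists>\<mu>>0. dispersion_mean k d a lam \<mu> = 1"
proof -
  have J0: "dispersion_mean k d a lam 0 > 1"
    using dispersion_mean_zero_gt_one[OF k d lam threshold] .
  have "eventually (\<lambda>\<mu>. dispersion_mean k d a lam \<mu> < 1) at_top"
    using order_tendstoD(2)[OF tendsto_dispersion_mean_at_top[OF k lam]] by simp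
  then obtain N where N: "\<And>\<mu>. \<mu> \<ge> N \<Longrightarrow> dispersion_mean k d a lam \<mu> < 1"
    unfolding eventually_at_top_linorder by blast
  define M where "M = max N 1"
  have M: "M > 0" "dispersion_mean k d a lam M < 1"
    using N[of M] unfolding M_def by auto
  have "continuous_on {0..M} (dispersion_mean k d a lam)"
    using continuous_on_subset[OF continuous_on_dispersion_mean[OF k lam]] by auto
  then obtain \<mu> where "0 \<le> \<mu>" "\<mu> \<le> M" "dispersion_mean k d a lam \<mu> = 1"
    using IVT2'[of "dispersion_mean k d a lam" M 1 0] J0 M by auto
  moreover have "\<mu> \<noteq> 0" using J0 \<open>dispersion_mean k d a lam \<mu> = 1\<close> by auto
  ultimately show ?thesis by (intro exI[of _ \<mu>]) simp
qed

definition plane_wave :: "real \<Rightarrow> real \<Rightarrow> complex" where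
  "plane_wave lam x = exp (\<i> * complex_of_real (lam * x))"

lemma plane_wave_0 [simp]: "plane_wave lam 0 = 1"
  unfolding plane_wave_def by simp

lemma plane_wave_nonzero [simp]: "plane_wave lam x \<noteq> 0"
  unfolding plane_wave_def by simp

lemma has_vector_derivative_plane_wave:
  "((\<lambda>y. c * plane_wave lam y) has_vector_derivative c * (\<i> * complex_of_real lam) * plane_wave lam x) (at x)"
proof -
  have "((\<lambda>z. c * exp (\<i> * complex_of_real lam * z)) has_field_derivative
      c * (\<i> * complex_of_real lam) * exp (\<i> * complex_of_real lam * complex_of_real x)) (at (complex_of_real x))"
    by (auto intro!: derivative_eq_intros)
  from has_vector_derivative_real_field[OF this]
  show ?thesis unfolding plane_wave_def by (simp add: mult_ac)
qed

lemma vector_derivative_plane_wave: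
  "vector_derivative (\<lambda>y. c * plane_wave lam y) (at x) = c * (\<i> * complex_of_real lam) * plane_wave lam x"
  by (rule vector_derivative_at[OF has_vector_derivative_plane_wave])

lemma differentiable_plane_wave: "(\<lambda>y. c * plane_wave lam y) differentiable (at x)"
  by (rule differentiableI_vector[OF has_vector_derivative_plane_wave])

lemma mult_dispersion_denominator_eq_iff:
  fixes k d a lam \<mu> s :: real
  assumes "1 + k * \<mu> > 0"
  shows "G * (complex_of_real (1 + k * \<mu>) + \<i> * complex_of_real (k * lam * s))
      = \<rho> * (complex_of_real (1 - k) + \<i> * complex_of_real (a * lam * s / (1 + d * lam^2)))
    \<longleftrightarrow> G = \<rho> * dispersion_integrand k d a lam \<mu> s"
proof -
  have "complex_of_real (1 + k * \<mu>) + \<i> * complex_of_real (k * lam * s) \<noteq> 0"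
    using assms by (simp add: complex_eq_iff)
  then show ?thesis
    unfolding dispersion_integrand_def by (auto simp: field_simps)
qed

lemma L_solution_plane_wave_iff_amplitudes:
  fixes k d a lam :: real and \<mu> Sh :: complex and gh :: "real^3 \<Rightarrow> complex"
  assumes gh: "sphere_integrable gh"
  defines "\<rho> \<equiv> sphere_avg gh" and "il \<equiv> \<i> * complex_of_real lam"
  shows "L_solution k d a \<mu> (\<lambda>x v. gh v * plane_wave lam x) (\<lambda>x. Sh * plane_wave lam x)
    \<longleftrightarrow> (\<forall>v\<in>sphere 0 1. complex_of_real k * (\<mu> * gh v + complex_of_real (v$1) * (gh v * il))
          = \<rho> + complex_of_real a * complex_of_real (v$1) * (Sh * il) - gh v - complex_of_real k * \<rho>)
      \<and> Sh * complex_of_real (1 + d * lam^2) = \<rho>"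
proof -
  have dS: "(\<lambda>y. vector_derivative (\<lambda>y. Sh * plane_wave lam y) (at y)) = (\<lambda>y. (Sh * il) * plane_wave lam y)"
    unfolding vector_derivative_plane_wave il_def by simp
  have avg: "sphere_avg (\<lambda>v. gh v * plane_wave lam x) = \<rho> * plane_wave lam x" for x
    unfolding \<rho>_def by (rule sphere_avg_mult_right)
  have kinetic: "complex_of_real k * (\<mu> * (gh v * plane_wave lam x) + complex_of_real (v$1) * (gh v * il * plane_wave lam x))
      = \<rho> * plane_wave lam x + complex_of_real a * complex_of_real (v$1) * (Sh * il * plane_wave lam x)
        - gh v * plane_wave lam x - complex_of_real k * (\<rho> * plane_wave lam x)
    \<longleftrightarrow> complex_of_real k * (\<mu> * gh v + complex_of_real (v$1) * (gh v * il))
      = \<rho> + complex_of_real a * complex_of_real (v$1) * (Sh * il) - gh v - complex_of_real k * \<rho>"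
    (is "?L = ?R \<longleftrightarrow> ?A = ?B") for v x
  proof -
    have "?L = ?A * plane_wave lam x" "?R = ?B * plane_wave lam x"
      by (simp_all add: algebra_simps)
    then show ?thesis by (simp only: mult_cancel_right plane_wave_nonzero simp_thms)
  qed
  have chemical: "- complex_of_real d * (Sh * il * il * plane_wave lam x) + Sh * plane_wave lam x = \<rho> * plane_wave lam x
    \<longleftrightarrow> Sh * complex_of_real (1 + d * lam^2) = \<rho>"
    (is "?L = _ \<longleftrightarrow> _") for x
  proof -
    have "?L = Sh * complex_of_real (1 + d * lam^2) * plane_wave lam x"
      unfolding il_def by (simp add: algebra_simps power2_eq_square)
    then show ?thesis by simp
  qed
  show ?thesis
    unfolding L_solution_def dS vector_derivative_plane_wave avg kinetic chemical il_def[symmetric]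
    using sphere_integrable_mult_right[OF gh] differentiable_plane_wave by simp
qed

lemma L_solution_plane_wave_iff:
  fixes k d a lam \<mu> :: real and Sh :: complex and gh :: "real^3 \<Rightarrow> complex"
  assumes d: "d \<ge> 0" and \<mu>: "1 + k * \<mu> > 0" and gh: "sphere_integrable gh"
  defines "\<rho> \<equiv> sphere_avg gh"
  shows "L_solution k d a (complex_of_real \<mu>) (\<lambda>x v. gh v * plane_wave lam x) (\<lambda>x. Sh * plane_wave lam x)
    \<longleftrightarrow> (\<forall>v\<in>sphere 0 1. gh v = \<rho> * dispersion_integrand k d a lam \<mu> (v$1))
      \<and> Sh = \<rho> / complex_of_real (1 + d * lam^2)"
proof -
  have "1 + d * lam^2 > 0" using d by (simp add: add_pos_nonneg)
  then have q: "complex_of_real (1 + d * lam^2) \<noteq> 0" by (simp only: of_real_eq_0_iff)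
  then have S: "Sh * complex_of_real (1 + d * lam^2) = \<rho> \<longleftrightarrow> Sh = \<rho> / complex_of_real (1 + d * lam^2)"
    by (auto simp: field_simps)
  have "complex_of_real k * (complex_of_real \<mu> * gh v + complex_of_real (v$1) * (gh v * (\<i> * complex_of_real lam)))
      = \<rho> + complex_of_real a * complex_of_real (v$1) * (Sh * (\<i> * complex_of_real lam)) - gh v - complex_of_real k * \<rho>
    \<longleftrightarrow> gh v = \<rho> * dispersion_integrand k d a lam \<mu> (v$1)"
    if "Sh = \<rho> / complex_of_real (1 + d * lam^2)" for v
  proof -
    have "complex_of_real k * (complex_of_real \<mu> * gh v + complex_of_real (v$1) * (gh v * (\<i> * complex_of_real lam)))
        - (\<rho> + complex_of_real a * complex_of_real (v$1) * (Sh * (\<i> * complex_of_real lam)) - gh v - complex_of_real k * \<rho>)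
      = gh v * (complex_of_real (1 + k * \<mu>) + \<i> * complex_of_real (k * lam * v$1))
        - \<rho> * (complex_of_real (1 - k) + \<i> * complex_of_real (a * lam * v$1 / (1 + d * lam^2)))"
      unfolding that using q by (simp add: field_simps)
    then show ?thesis
      using mult_dispersion_denominator_eq_iff[OF \<mu>] by (metis eq_iff_diff_eq_0)
  qed
  then show ?thesis
    unfolding L_solution_plane_wave_iff_amplitudes[OF gh] \<rho>_def[symmetric] S by blast
qed

lemma fourier_solution_imp_dispersion_mean:
  fixes k d a lam \<mu> :: real
  assumes k: "k > 0" and d: "d \<ge> 0" and lam: "lam > 0" and \<mu>: "1 + k * \<mu> > 0"
    and "fourier_solution k d a lam (complex_of_real \<mu>)"
  shows "dispersion_mean k d a lam \<mu> = 1"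
proof -
  obtain gh Sh v0 where v0: "v0 \<in> sphere 0 1" "gh v0 \<noteq> 0"
    and L: "L_solution k d a (complex_of_real \<mu>) (\<lambda>x v. gh v * plane_wave lam x) (\<lambda>x. Sh * plane_wave lam x)"
    using assms(5) unfolding fourier_solution_def plane_wave_def by blast
  define \<rho> where "\<rho> = sphere_avg gh"
  have "sphere_integrable (\<lambda>v. gh v * plane_wave lam 0)"
    using L unfolding L_solution_def by blast
  then have "sphere_integrable gh" by simp
  from L_solution_plane_wave_iff[OF d \<mu> this, THEN iffD1, OF L]
  have gh: "\<And>v. v \<in> sphere 0 1 \<Longrightarrow> gh v = \<rho> * dispersion_integrand k d a lam \<mu> (v$1)"
    unfolding \<rho>_def by blast
  then have "\<rho> = sphere_avg (\<lambda>v. dispersion_integrand k d a lam \<mu> (v$1) * \<rho>)"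
    unfolding \<rho>_def by (subst sphere_avg_cong[of gh]) (simp_all add: mult.commute)
  also have "\<dots> = complex_of_real (dispersion_mean k d a lam \<mu>) * \<rho>"
    by (simp add: sphere_avg_mult_right sphere_avg_dispersion_integrand[OF k lam \<mu>])
  finally have "\<rho> * (complex_of_real (dispersion_mean k d a lam \<mu>) - 1) = 0"
    by (simp add: algebra_simps)
  moreover have "\<rho> \<noteq> 0" using gh[OF v0(1)] v0(2) by auto
  ultimately show ?thesis by simp
qed

lemma dispersion_mean_imp_fourier_solution:
  fixes k d a lam \<mu> :: real
  assumes k: "k > 0" and d: "d \<ge> 0" and a: "a > 0" and lam: "lam > 0" and \<mu>: "1 + k * \<mu> > 0"
    and J: "dispersion_mean k d a lam \<mu> = 1"
  shows "fourier_solution k d a lam (complex_of_real \<mu>)"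
proof -
  define gh where "gh = (\<lambda>v::real^3. dispersion_integrand k d a lam \<mu> (v$1))"
  define e1 where "e1 = (vector [1, 0, 0] :: real^3)"
  have "sphere_integrable gh" "sphere_avg gh = 1"
    unfolding gh_def using sphere_integrable_dispersion_integrand[OF k lam \<mu>]
      sphere_avg_dispersion_integrand[OF k lam \<mu>] J by simp_all
  then have "L_solution k d a (complex_of_real \<mu>) (\<lambda>x v. gh v * plane_wave lam x)
      (\<lambda>x. complex_of_real (1 / (1 + d * lam^2)) * plane_wave lam x)"
    by (intro L_solution_plane_wave_iff[OF d \<mu>, THEN iffD2]) (simp_all add: gh_def)
  moreover have "e1 \<in> sphere 0 1"
    unfolding e1_def by (simp add: norm_vec_def L2_set_def sum_3)
  moreover have "gh e1 \<noteq> 0"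
  proof -
    have "1 + d * lam^2 > 0" using d by (simp add: add_pos_nonneg)
    then have "complex_of_real (1 - k) + \<i> * complex_of_real (a * lam * 1 / (1 + d * lam^2)) \<noteq> 0"
      using a lam by (simp add: complex_eq_iff)
    moreover have "complex_of_real (1 + k * \<mu>) + \<i> * complex_of_real (k * lam * 1) \<noteq> 0"
      using \<mu> by (simp add: complex_eq_iff)
    ultimately show ?thesis unfolding gh_def e1_def dispersion_integrand_def by simp
  qed
  ultimately show ?thesis
    unfolding fourier_solution_def plane_wave_def by blast
qed

lemma linearly_unstable_if_instab_rhs_less:
  fixes k d a lam :: real
  assumes "k > 0" "d \<ge> 0" "a > 0" "lam > 0" "a / k > instab_rhs k d lam"
  shows "linearly_unstable k d a"
proof -
  obtain \<mu> where "\<mu> > 0" "dispersion_mean k d a lam \<mu> = 1"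
    using exists_dispersion_mean_eq_one assms by blast
  moreover from \<open>\<mu> > 0\<close> have "1 + k * \<mu> > 0" using assms by (simp add: add_pos_pos)
  ultimately have "fourier_solution k d a lam (complex_of_real \<mu>)"
    using dispersion_mean_imp_fourier_solution assms by blast
  then show ?thesis
    unfolding linearly_unstable_def using \<open>\<mu> > 0\<close> by force
qed

lemma linearly_unstable_if_Inf_instab_rhs_less:
  fixes k d a :: real
  assumes k: "k > 0" and d: "d \<ge> 0" and a: "a > 0"
    and below: "a / k > (INF l\<in>{0<..}. instab_rhs k d l)"
  shows "linearly_unstable k d a"
proof -
  have "instab_rhs k d l \<ge> 0" if "l > 0" for l
    using instab_rhs_gt[OF k d that] mult_nonneg_nonneg[OF d zero_le_power2[of l]] by linarith
  then have "bdd_below (instab_rhs k d ` {0<..})"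
    by (intro bdd_belowI[of _ 0]) auto
  then obtain l where "l > 0" "a / k > instab_rhs k d l"
    using below by (auto simp: cInf_less_iff)
  then show ?thesis using linearly_unstable_if_instab_rhs_less k d a by blast
qed

lemma instab_rhs_less_imp_ratio_gt_one:
  fixes k d a lam :: real
  assumes k: "k > 0" and d: "d \<ge> 0" and lam: "lam > 0" and "a / k > instab_rhs k d lam"
  shows "a / (k * (1 + d * lam^2)) > 1"
    and "d > 0 \<Longrightarrow> lam < sqrt ((a / k - 1) / d)"
proof -
  have "1 + d * lam^2 < a / k"
    using instab_rhs_gt[OF k d lam] assms(4) by linarith
  then show "a / (k * (1 + d * lam^2)) > 1" and "d > 0 \<Longrightarrow> lam < sqrt ((a / k - 1) / d)"
    using k d by (auto intro!: real_less_rsqrt simp: field_simps add_pos_nonneg)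
qed

theorem mainTheorem2:
  fixes k d a lam :: real
  assumes "k > 0" and "d \<ge> 0" and "a > 0" and "lam > 0"
    and "a / k > (1 + k / (k * lam / arctan (k * lam) - 1)) * (1 + d * lam^2)"
  shows "(\<exists>\<mu>::real. \<mu> > 0 \<and> dispersion k d a lam \<mu>)
    \<and> (\<forall>\<mu>::real. \<mu> > 0 \<longrightarrow> (dispersion k d a lam \<mu> \<longleftrightarrow> fourier_solution k d a lam (complex_of_real \<mu>)))
    \<and> (a / k > (INF l\<in>{0<..}. instab_rhs k d l) \<longrightarrow> linearly_unstable k d a)
    \<and> a / (k * (1 + d * lam^2)) > 1
    \<and> (d > 0 \<longrightarrow> lam < sqrt ((a / k - 1) / d))"
proof -
  note k = assms(1) and d = assms(2) and a = assms(3) and lam = assms(4)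
  have threshold: "a / k > instab_rhs k d lam"
    using assms(5) unfolding instab_rhs_def .
  have "dispersion k d a lam \<mu> \<longleftrightarrow> dispersion_mean k d a lam \<mu> = 1"
    and "dispersion_mean k d a lam \<mu> = 1 \<longleftrightarrow> fourier_solution k d a lam (complex_of_real \<mu>)"
    if "\<mu> > 0" for \<mu>
  proof -
    from that k have \<mu>: "1 + k * \<mu> > 0" by (simp add: add_pos_pos)
    show "dispersion k d a lam \<mu> \<longleftrightarrow> dispersion_mean k d a lam \<mu> = 1"
      by (rule dispersion_iff_dispersion_mean[OF k lam \<mu>])
    show "dispersion_mean k d a lam \<mu> = 1 \<longleftrightarrow> fourier_solution k d a lam (complex_of_real \<mu>)"
      using dispersion_mean_imp_fourier_solution[OF k d a lam \<mu>]
        fourier_solution_imp_dispersion_mean[OF k d lam \<mu>] by blast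
  qed
  then show ?thesis
    using exists_dispersion_mean_eq_one[OF k d lam threshold] linearly_unstable_if_Inf_instab_rhs_less[OF k d a]
      instab_rhs_less_imp_ratio_gt_one[OF k d lam threshold] by blast
qed

end
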